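(* Let $\Omega\subset\mathbb{R}^n$ be connected, bounded and of class $C^\infty$, fix $\alpha\in(0,1)$ and distinct integers $n_1,\dots,n_K$. Let $(a^{ij}_\epsilon),(b^i_\epsilon),(\rho_\epsilon)\in\mathcal{E}_M(\overline{\Omega})$ satisfy for all $\epsilon<1$: $a^{ij}_\epsilon=a^{ji}_\epsilon$, $a^{ij}_\epsilon\xi_i\xi_j\ge\lambda_\epsilon|\xi|^2\ge C_1\epsilon^{a_1}|\xi|^2$; for all $k$, $|a^{ij}_\epsilon|_{k,\alpha;\Omega},|b^i_\epsilon|_{k,\alpha;\Omega}\le\Lambda_{k,\epsilon}\le C_2(k)\epsilon^{a_2(k)}$; $\{n_i:n_i<0\}\ne\emptyset$, $n_1=\min\{n_i:n_i<0\}$, $b^1_\epsilon\le-C_3\epsilon^{a_3}$; $\{n_i:n_i>0\}\ne\emptyset$, $n_K=\max\{n_i:n_i>0\}$, $b^K_\epsilon\ge C_4\epsilon^{a_4}$; $\rho_\epsilon\ge C_5\epsilon^{a_5}$, with positive constants $C_1,C_2(k),\dots,C_5$ and reals $a_1,a_2(k),\dots,a_5$ independent of $\epsilon$. Define $$\alpha'_\epsilon=\sup\Big\{c>0:\sum_{i=1}^K\sup_{x\in\overline{\Omega}}b^i_\epsilon(x)y^{n_i}<0\ \forall y\in(0,c)\Big\},\quad \beta'_\epsilon=\inf\Big\{c\in\mathbb{R}:\sum_{i=1}^K\inf_{x\in\overline{\Omega}}b^i_\epsilon(x)y^{n_i}>0\ \forall y\in(c,\infty)\Big\},$$ $\alpha_\epsilon=\min\{\alpha'_\epsilon,\inf_{\partial\Omega}\rho_\epsilon\}$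 and $\beta_\epsilon=\max\{\beta'_\epsilon,\sup_{\partial\Omega}\rho_\epsilon\}$. Then the nets $(\alpha_\epsilon)$, $(\beta_\epsilon)$, $(1/\alpha_\epsilon)$ and $(1/\beta_\epsilon)$ belong to $\overline{\mathbb{C}}$, the ring of generalized constants.
   Context: $\overline{\mathbb{C}}$ is the quotient of the set of nets $(r_\epsilon)_{\epsilon\in(0,1]}$ of complex numbers with $|r_\epsilon|=O(\epsilon^a)$ as $\epsilon\to0$ for some $a\in\mathbb{R}$ (moderate nets), by the nets with $|r_\epsilon|=O(\epsilon^a)$ for every $a\in\mathbb{R}$; a net "belongs to $\overline{\mathbb{C}}$" if it is moderate. Hölder norm: $|u|_{k,\alpha;\Omega}=\sum_{j\le k}\sup_{|\beta|=j}\sup_{\overline{\Omega}}|D^\beta u|+\sup_{|\beta|=k}\sup_{x\ne y}|D^\beta u(x)-D^\beta u(y)|/|x-y|^\alpha$. $\mathcal{E}_M(\overline{\Omega})$ is the set of nets $(u_\epsilon)_{\epsilon\in(0,1]}\subset C^\infty(\overline{\Omega})$ such that for every $k$ there is $a\in\mathbb{R}$ with $\sup_{|\beta|\le k,x\in\overline{\Omega}}|D^\beta u_\epsilon|=O(\epsilon^a)$. *)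

theory Defs
  imports "HOL-Analysis.Analysis" "HOL-Library.Landau_Symbols"
begin

definition partial :: "'n::finite \<Rightarrow> (real^'n \<Rightarrow> real) \<Rightarrow> real^'n \<Rightarrow> real" where
  "partial i f x = deriv (\<lambda>t. f (x + t *\<^sub>R axis i 1)) 0"

text \<open>Iterated partial derivatives; a list of coordinate indices of length j
  encodes a derivative of order j (for smooth functions the order is irrelevant).\<close>
fun Dlist :: "'n::finite list \<Rightarrow> (real^'n \<Rightarrow> real) \<Rightarrow> real^'n \<Rightarrow> real" where
  "Dlist [] f = f"
| "Dlist (i # is) f = partial i (Dlist is f)"

definition smooth_on :: "(real^'n::finite) set \<Rightarrow> (real^'n \<Rightarrow> real) \<Rightarrow> bool" where
  "smooth_on S f \<longleftrightarrow>
     (\<forall>is i. \<forall>x\<in>S. (\<lambda>t. Dlist is f (x + t *\<^sub>R axis i 1)) differentiable (at 0))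
   \<and> (\<forall>is. continuous_on S (Dlist is f))"

definition smooth_map_on :: "(real^'n::finite) set \<Rightarrow> (real^'n \<Rightarrow> real^'n) \<Rightarrow> bool" where
  "smooth_map_on S \<psi> \<longleftrightarrow> (\<forall>j. smooth_on S (\<lambda>x. \<psi> x $ j))"

definition C_inf_closure :: "(real^'n::finite) set \<Rightarrow> (real^'n \<Rightarrow> real) \<Rightarrow> bool" where
  "C_inf_closure \<Omega> u \<longleftrightarrow> smooth_on \<Omega> u \<and> continuous_on (closure \<Omega>) u \<and>
     (\<forall>is. \<exists>g. continuous_on (closure \<Omega>) g \<and> (\<forall>x\<in>\<Omega>. g x = Dlist is u x))"

text \<open>Domain of class C-infinity (Gilbarg--Trudinger, Sec. 6.2): each boundary point has a
  ball B and a smooth bijection psi of B onto an open D with smooth inverse, flattening the boundary.\<close>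
definition smooth_domain :: "(real^'n::finite) set \<Rightarrow> bool" where
  "smooth_domain \<Omega> \<longleftrightarrow> open \<Omega> \<and>
    (\<forall>p\<in>frontier \<Omega>. \<exists>r>0. \<exists>\<psi>::real^'n \<Rightarrow> real^'n. \<exists>k.
        inj_on \<psi> (ball p r) \<and> open (\<psi> ` ball p r)
      \<and> \<psi> ` (ball p r \<inter> \<Omega>) \<subseteq> {x. x $ k > 0}
      \<and> \<psi> ` (ball p r \<inter> frontier \<Omega>) \<subseteq> {x. x $ k = 0}
      \<and> smooth_map_on (ball p r) \<psi>
      \<and> smooth_map_on (\<psi> ` ball p r) (inv_into (ball p r) \<psi>))"

text \<open>Suprema over closure Omega are taken over Omega; for functions in C-infinity(closure Omega)
  these coincide by continuity of the extended derivatives.\<close>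
definition holder_norm :: "nat \<Rightarrow> real \<Rightarrow> (real^'n::finite) set \<Rightarrow> (real^'n \<Rightarrow> real) \<Rightarrow> ereal" where
  "holder_norm k \<alpha> \<Omega> u =
     (\<Sum>j\<le>k. SUP is\<in>{is. length is = j}. SUP x\<in>\<Omega>. ereal \<bar>Dlist is u x\<bar>)
   + (SUP is\<in>{is. length is = k}. SUP xy\<in>{(x,y). x \<in> \<Omega> \<and> y \<in> \<Omega> \<and> x \<noteq> y}.
        ereal (\<bar>Dlist is u (fst xy) - Dlist is u (snd xy)\<bar> / norm (fst xy - snd xy) powr \<alpha>))"

definition moderate_smooth_net :: "(real^'n::finite) set \<Rightarrow> (real \<Rightarrow> real^'n \<Rightarrow> real) \<Rightarrow> bool" where
  "moderate_smooth_net \<Omega> u \<longleftrightarrow>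
     (\<forall>\<epsilon>\<in>{0<..1}. C_inf_closure \<Omega> (u \<epsilon>)) \<and>
     (\<forall>k. \<exists>a C. \<forall>\<^sub>F \<epsilon> in at_right 0. \<forall>is. length is \<le> k \<longrightarrow>
            (\<forall>x\<in>\<Omega>. \<bar>Dlist is (u \<epsilon>) x\<bar> \<le> C * \<epsilon> powr a))"

text \<open>A net belongs to the generalized constants iff it is moderate.\<close>
definition moderate_net :: "(real \<Rightarrow> 'b::real_normed_field) \<Rightarrow> bool" where
  "moderate_net r \<longleftrightarrow> (\<exists>a::real. r \<in> O[at_right 0](\<lambda>\<epsilon>. of_real (\<epsilon> powr a)))"

end

theory Submission
  imports Defs
begin

text \<open>For each \<open>\<epsilon>\<close> the coefficients \<open>sup b\<^sub>i\<close>, \<open>inf b\<^sub>i\<close> of the two comparison polynomials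
  are bounded in absolute value by a moderate net \<open>B\<close>; the coefficient of the lowest power is
  \<open>\<le> -c\<^sub>3 = -C\<^sub>3 \<epsilon>\<^sup>a\<^sup>3\<close> and that of the highest power is \<open>\<ge> c\<^sub>4 = C\<^sub>4 \<epsilon>\<^sup>a\<^sup>4\<close>. Hence both polynomials
  are negative on \<open>(0, \<delta>]\<close> and positive on \<open>[y\<^sub>0, \<infinity>)\<close> for \<open>\<delta> = c\<^sub>3 / (K B + c\<^sub>3)\<close> and
  \<open>y\<^sub>0 = 1 + K B / c\<^sub>4\<close>, so \<open>\<alpha>'\<close> and \<open>\<beta>'\<close> lie in \<open>[\<delta>, y\<^sub>0]\<close>. With \<open>C\<^sub>5 \<epsilon>\<^sup>a\<^sup>5 \<le> \<rho> \<le> R\<close> on the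
  boundary this traps \<open>\<alpha>\<close> and \<open>\<beta>\<close> between \<open>min \<delta> c\<^sub>5\<close> and \<open>y\<^sub>0 + R\<close>, and the nets \<open>y\<^sub>0\<close>,
  \<open>1 / \<delta> = 1 + K B / c\<^sub>3\<close>, \<open>1 / c\<^sub>5\<close> are built from moderate nets by sums and products.\<close>

lemma eventually_at_right_0_in_unit_interval:
  "\<forall>\<^sub>F \<epsilon> in at_right (0::real). 0 < \<epsilon> \<and> \<epsilon> < 1"
  unfolding eventually_at_right_field by (intro exI[of _ 1]) auto

lemma moderate_net_iff_eventually_le:
  "moderate_net f \<longleftrightarrow> (\<exists>M a. \<forall>\<^sub>F \<epsilon> in at_right 0. norm (f \<epsilon>) \<le> M * \<epsilon> powr a)"
proof
  assume "moderate_net f"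
  then obtain a c where "\<forall>\<^sub>F \<epsilon> in at_right 0. norm (f \<epsilon>) \<le> c * norm (of_real (\<epsilon> powr a) :: 'a)"
    unfolding moderate_net_def bigo_def by blast
  then show "\<exists>M a. \<forall>\<^sub>F \<epsilon> in at_right 0. norm (f \<epsilon>) \<le> M * \<epsilon> powr a"
    by (intro exI[of _ c] exI[of _ a]) (auto elim: eventually_mono)
next
  assume "\<exists>M a. \<forall>\<^sub>F \<epsilon> in at_right 0. norm (f \<epsilon>) \<le> M * \<epsilon> powr a"
  then obtain M a where "\<forall>\<^sub>F \<epsilon> in at_right 0. norm (f \<epsilon>) \<le> M * \<epsilon> powr a" by blast
  then have "f \<in> O[at_right 0](\<lambda>\<epsilon>. of_real (\<epsilon> powr a))"
    by (intro bigoI[where c=M]) (auto elim: eventually_mono)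
  then show "moderate_net f" unfolding moderate_net_def by blast
qed

lemma moderate_netE:
  assumes "moderate_net f"
  obtains M a where "M \<ge> 0" "\<forall>\<^sub>F \<epsilon> in at_right 0. norm (f \<epsilon>) \<le> M * \<epsilon> powr a"
proof -
  obtain M a where "\<forall>\<^sub>F \<epsilon> in at_right 0. norm (f \<epsilon>) \<le> M * \<epsilon> powr a"
    using assms unfolding moderate_net_iff_eventually_le by blast
  then have "\<forall>\<^sub>F \<epsilon> in at_right 0. norm (f \<epsilon>) \<le> \<bar>M\<bar> * \<epsilon> powr a"
    by eventually_elim (erule order.trans, intro mult_right_mono, auto)
  then show thesis by (rule that[OF abs_ge_zero])
qed

lemma moderate_net_of_real_iff [simp]:
  "moderate_net (\<lambda>\<epsilon>. of_real (f \<epsilon>) :: 'a::real_normed_field) \<longleftrightarrow> moderate_net f"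
  unfolding moderate_net_iff_eventually_le by simp

lemma moderate_net_dominated:
  assumes "moderate_net g" and "\<forall>\<^sub>F \<epsilon> in at_right 0. norm (f \<epsilon>) \<le> norm (g \<epsilon>)"
  shows "moderate_net f"
proof -
  obtain M a where "\<forall>\<^sub>F \<epsilon> in at_right 0. norm (g \<epsilon>) \<le> M * \<epsilon> powr a"
    using assms(1) unfolding moderate_net_iff_eventually_le by blast
  with assms(2) have "\<forall>\<^sub>F \<epsilon> in at_right 0. norm (f \<epsilon>) \<le> M * \<epsilon> powr a"
    by eventually_elim linarith
  then show ?thesis unfolding moderate_net_iff_eventually_le by blast
qed

lemma moderate_net_const: "moderate_net (\<lambda>_. c)"
  unfolding moderate_net_iff_eventually_le
  by (intro exI[of _ "norm c"] exI[of _ 0] eventually_mono[OF eventually_at_right_less]) auto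

lemma moderate_net_powr: "moderate_net (\<lambda>\<epsilon>. \<epsilon> powr a)"
  unfolding moderate_net_iff_eventually_le
  by (intro exI[of _ 1] exI[of _ a] always_eventually) auto

lemma moderate_net_add:
  assumes "moderate_net f" and "moderate_net g"
  shows "moderate_net (\<lambda>\<epsilon>. f \<epsilon> + g \<epsilon>)"
proof -
  obtain M a where M: "M \<ge> 0" "\<forall>\<^sub>F \<epsilon> in at_right 0. norm (f \<epsilon>) \<le> M * \<epsilon> powr a"
    using assms(1) by (rule moderate_netE)
  obtain M' b where M': "M' \<ge> 0" "\<forall>\<^sub>F \<epsilon> in at_right 0. norm (g \<epsilon>) \<le> M' * \<epsilon> powr b"
    using assms(2) by (rule moderate_netE)
  have "\<forall>\<^sub>F \<epsilon> in at_right 0. norm (f \<epsilon> + g \<epsilon>) \<le> (M + M') * \<epsilon> powr min a b"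
    using M(2) M'(2) eventually_at_right_0_in_unit_interval
  proof eventually_elim
    case (elim \<epsilon>)
    have "norm (f \<epsilon> + g \<epsilon>) \<le> M * \<epsilon> powr a + M' * \<epsilon> powr b"
      using elim(1,2) norm_triangle_ineq[of "f \<epsilon>" "g \<epsilon>"] by linarith
    also have "\<dots> \<le> M * \<epsilon> powr min a b + M' * \<epsilon> powr min a b"
      using M(1) M'(1) elim(3) by (intro add_mono mult_left_mono powr_mono') auto
    finally show ?case by (simp add: algebra_simps)
  qed
  then show ?thesis unfolding moderate_net_iff_eventually_le by blast
qed

lemma moderate_net_mult:
  assumes "moderate_net f" and "moderate_net g"
  shows "moderate_net (\<lambda>\<epsilon>. f \<epsilon> * g \<epsilon>)"
proof -
  obtain M a where M: "M \<ge> 0" "\<forall>\<^sub>F \<epsilon> in at_right 0. norm (f \<epsilon>) \<le> M * \<epsilon> powr a"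
    using assms(1) by (rule moderate_netE)
  obtain M' b where M': "M' \<ge> 0" "\<forall>\<^sub>F \<epsilon> in at_right 0. norm (g \<epsilon>) \<le> M' * \<epsilon> powr b"
    using assms(2) by (rule moderate_netE)
  have "\<forall>\<^sub>F \<epsilon> in at_right 0. norm (f \<epsilon> * g \<epsilon>) \<le> (M * M') * \<epsilon> powr (a + b)"
    using M(2) M'(2) eventually_at_right_less
  proof eventually_elim
    case (elim \<epsilon>)
    have "norm (f \<epsilon> * g \<epsilon>) \<le> (M * \<epsilon> powr a) * (M' * \<epsilon> powr b)"
      unfolding norm_mult using elim(1,2) M(1) M'(1) by (intro mult_mono) auto
    then show ?case using elim(3) by (simp add: powr_add algebra_simps)
  qed
  then show ?thesis unfolding moderate_net_iff_eventually_le by blast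
qed

lemma moderate_net_sum:
  assumes "finite I" and "\<And>i. i \<in> I \<Longrightarrow> moderate_net (f i)"
  shows "moderate_net (\<lambda>\<epsilon>. \<Sum>i\<in>I. f i \<epsilon>)"
  using assms by (induction I rule: finite_induct) (auto intro: moderate_net_add moderate_net_const)

lemma powi_sum_neg_near_0:
  fixes c :: "nat \<Rightarrow> real" and nn :: "nat \<Rightarrow> int"
  assumes K: "1 \<le> K" and lowest: "\<forall>i\<in>{1..K} - {1}. nn 1 < nn i"
    and c1: "c 1 \<le> - c3" and c3: "c3 > 0" and B: "B \<ge> 0" and cB: "\<forall>i\<in>{1..K}. \<bar>c i\<bar> \<le> B"
    and y: "0 < y" "y \<le> c3 / (real K * B + c3)"
  shows "(\<Sum>i=1..K. c i * y powi nn i) < 0"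
proof -
  have KB: "0 \<le> real K * B" using B by simp
  then have "c3 / (real K * B + c3) \<le> 1" using c3 by simp
  then have y1: "y \<le> 1" using y(2) by linarith
  let ?p = "y powi nn 1"
  have p: "?p > 0" using y by simp
  have others: "c i * y powi nn i \<le> B * y * ?p" if i: "i \<in> {1..K} - {1}" for i
  proof -
    have "\<bar>c i\<bar> \<le> B" and "nn 1 < nn i" using cB lowest i by blast+
    then have "c i \<le> B" by simp
    have "c i * y powi nn i \<le> B * y powi nn i"
      using \<open>c i \<le> B\<close> y by (intro mult_right_mono) auto
    also have "\<dots> \<le> B * y powi (nn 1 + 1)"
      using B y y1 \<open>nn 1 < nn i\<close> by (intro mult_left_mono power_int_decreasing) auto
    also have "\<dots> = B * y * ?p" using y by (simp add: power_int_add_1)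
    finally show ?thesis .
  qed
  have "(\<Sum>i=1..K. c i * y powi nn i) = c 1 * ?p + (\<Sum>i\<in>{1..K} - {1}. c i * y powi nn i)"
    using K by (subst sum.remove[of _ 1]) auto
  also have "\<dots> \<le> - c3 * ?p + (\<Sum>i\<in>{1..K} - {1}. B * y * ?p)"
    using c1 p others by (intro add_mono mult_right_mono sum_mono) auto
  also have "\<dots> = ?p * (real (K - 1) * B * y - c3)"
    using K by (simp add: algebra_simps)
  also have "\<dots> < 0"
  proof -
    have "real (K - 1) * B * y \<le> real K * B * y" using B y by (intro mult_right_mono) auto
    also have "\<dots> \<le> real K * B * (c3 / (real K * B + c3))" using y KB by (intro mult_left_mono) auto
    also have "\<dots> < c3" using KB c3 by (simp add: field_simps)
    finally show ?thesis using p by (simp add: mult_pos_neg)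
  qed
  finally show ?thesis .
qed

lemma powi_sum_pos_at_top:
  fixes c :: "nat \<Rightarrow> real" and nn :: "nat \<Rightarrow> int"
  assumes K: "1 \<le> K" and highest: "\<forall>i\<in>{1..K} - {K}. nn i < nn K"
    and cK: "c K \<ge> c4" and c4: "c4 > 0" and B: "B \<ge> 0" and cB: "\<forall>i\<in>{1..K}. \<bar>c i\<bar> \<le> B"
    and y: "1 + real K * B / c4 \<le> y"
  shows "(\<Sum>i=1..K. c i * y powi nn i) > 0"
proof -
  have "0 \<le> real K * B / c4" using B c4 by simp
  then have y1: "1 \<le> y" using y by linarith
  let ?q = "y powi (nn K - 1)"
  have q: "?q > 0" using y1 by simp
  have others: "- B * ?q \<le> c i * y powi nn i" if i: "i \<in> {1..K} - {K}" for i
  proof -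
    have "\<bar>c i\<bar> \<le> B" and "nn i < nn K" using cB highest i by blast+
    then have "- B \<le> c i" by simp
    have "- B * ?q \<le> - B * y powi nn i"
      using B y1 \<open>nn i < nn K\<close> by (simp, intro mult_left_mono power_int_increasing) auto
    also have "\<dots> \<le> c i * y powi nn i"
      using \<open>- B \<le> c i\<close> y1 by (intro mult_right_mono) auto
    finally show ?thesis .
  qed
  have "0 < ?q * (c4 * y - real (K - 1) * B)"
  proof -
    have "c4 + real K * B = c4 * (1 + real K * B / c4)" using c4 by (simp add: field_simps)
    also have "\<dots> \<le> c4 * y" using y c4 by (intro mult_left_mono) auto
    finally have "c4 + real K * B \<le> c4 * y" .
    moreover have "real (K - 1) * B \<le> real K * B" using B by (intro mult_right_mono) auto
    ultimately show ?thesis using c4 q by (simp add: mult_pos_pos)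
  qed
  also have "\<dots> = c4 * (y * ?q) + (\<Sum>i\<in>{1..K} - {K}. - B * ?q)"
    using K by (simp add: algebra_simps)
  also have "\<dots> \<le> c K * y powi nn K + (\<Sum>i\<in>{1..K} - {K}. c i * y powi nn i)"
    using cK q y1 others power_int_add_1'[of y "nn K - 1"]
    by (intro add_mono mult_right_mono sum_mono) auto
  also have "\<dots> = (\<Sum>i=1..K. c i * y powi nn i)"
    using K by (subst (2) sum.remove[of _ K]) auto
  finally show ?thesis .
qed

lemma sign_change_threshold_bounds:
  fixes P :: "real \<Rightarrow> real"
  assumes \<delta>: "0 < \<delta>" and neg: "\<forall>y\<in>{0<..\<delta>}. P y < 0" and pos: "\<forall>y\<in>{y0..}. P y > 0"
  shows "\<delta> \<le> Sup {c. c > 0 \<and> (\<forall>y\<in>{0<..<c}. P y < 0)}"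
    and "Sup {c. c > 0 \<and> (\<forall>y\<in>{0<..<c}. P y < 0)} \<le> y0"
    and "\<delta> \<le> Inf {c. \<forall>y\<in>{c<..}. P y > 0}"
    and "Inf {c. \<forall>y\<in>{c<..}. P y > 0} \<le> y0"
proof -
  define A where "A = {c. c > 0 \<and> (\<forall>y\<in>{0<..<c}. P y < 0)}"
  define Z where "Z = {c. \<forall>y\<in>{c<..}. P y > 0}"
  have "\<delta> < y0"
  proof (rule ccontr)
    assume "\<not> \<delta> < y0"
    then have "P \<delta> > 0" using pos by auto
    moreover have "P \<delta> < 0" using neg \<delta> by simp
    ultimately show False by simp
  qed
  have \<delta>A: "\<delta> \<in> A" unfolding A_def using \<delta> neg by auto
  have A_le: "c \<le> y0" if "c \<in> A" for c
  proof (rule ccontr)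
    assume "\<not> c \<le> y0"
    then have "y0 \<in> {0<..<c}" using \<open>\<delta> < y0\<close> \<delta> by simp
    then have "P y0 < 0" using that unfolding A_def by blast
    moreover have "P y0 > 0" using pos by simp
    ultimately show False by simp
  qed
  show "\<delta> \<le> Sup A" using \<delta>A A_le by (intro cSup_upper bdd_aboveI) auto
  show "Sup A \<le> y0" using \<delta>A A_le by (intro cSup_least) auto
  have y0Z: "y0 \<in> Z" unfolding Z_def using pos by auto
  have Z_ge: "\<delta> \<le> c" if "c \<in> Z" for c
  proof (rule ccontr)
    assume "\<not> \<delta> \<le> c"
    then have "P \<delta> > 0" using that unfolding Z_def by auto
    moreover have "P \<delta> < 0" using neg \<delta> by simp
    ultimately show False by simp
  qed
  show "\<delta> \<le> Inf Z" using y0Z Z_ge by (intro cInf_greatest) auto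
  show "Inf Z \<le> y0" using y0Z Z_ge by (intro cInf_lower bdd_belowI) auto
qed

lemma Min_negative_exponent_lowest:
  fixes nn :: "nat \<Rightarrow> int"
  assumes inj: "inj_on nn {1..K}" and ne: "{nn i | i. i \<in> {1..K} \<and> nn i < 0} \<noteq> {}"
    and min: "nn 1 = Min {nn i | i. i \<in> {1..K} \<and> nn i < 0}"
  shows "1 \<le> K" and "\<forall>i\<in>{1..K} - {1}. nn 1 < nn i"
proof -
  let ?N = "{nn i | i. i \<in> {1..K} \<and> nn i < 0}"
  have fin: "finite ?N" by simp
  show K: "1 \<le> K" using ne by auto
  have "nn 1 < 0" using Min_in[OF fin ne] min by auto
  show "\<forall>i\<in>{1..K} - {1}. nn 1 < nn i"
  proof
    fix i assume i: "i \<in> {1..K} - {1}"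
    then have "nn i \<noteq> nn 1" using inj_onD[OF inj, of i 1] K by auto
    moreover have "nn 1 \<le> nn i" if "nn i < 0"
    proof -
      have "nn i \<in> ?N" using that i by blast
      then show ?thesis using Min_le[OF fin] min by simp
    qed
    ultimately show "nn 1 < nn i" using \<open>nn 1 < 0\<close> by fastforce
  qed
qed

lemma Max_positive_exponent_highest:
  fixes nn :: "nat \<Rightarrow> int"
  assumes inj: "inj_on nn {1..K}" and ne: "{nn i | i. i \<in> {1..K} \<and> nn i > 0} \<noteq> {}"
    and max: "nn K = Max {nn i | i. i \<in> {1..K} \<and> nn i > 0}"
  shows "\<forall>i\<in>{1..K} - {K}. nn i < nn K"
proof
  let ?P = "{nn i | i. i \<in> {1..K} \<and> nn i > 0}"
  have fin: "finite ?P" by simp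
  have "nn K > 0" using Max_in[OF fin ne] max by auto
  fix i assume i: "i \<in> {1..K} - {K}"
  then have "nn i \<noteq> nn K" using inj_onD[OF inj, of i K] by auto
  moreover have "nn i \<le> nn K" if "nn i > 0"
  proof -
    have "nn i \<in> ?P" using that i by blast
    then show ?thesis using Max_ge[OF fin] max by simp
  qed
  ultimately show "nn i < nn K" using \<open>nn K > 0\<close> by fastforce
qed

lemma moderate_smooth_net_bounded_on_closure:
  assumes "moderate_smooth_net \<Omega> u"
  obtains B where "moderate_net B" and "\<forall>\<^sub>F \<epsilon> in at_right 0. \<forall>x\<in>closure \<Omega>. \<bar>u \<epsilon> x\<bar> \<le> B \<epsilon>"
proof -
  obtain a C where "\<forall>\<^sub>F \<epsilon> in at_right 0. \<forall>is. length is \<le> 0 \<longrightarrow>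
      (\<forall>x\<in>\<Omega>. \<bar>Dlist is (u \<epsilon>) x\<bar> \<le> C * \<epsilon> powr a)"
    using assms unfolding moderate_smooth_net_def by blast
  then have bound: "\<forall>\<^sub>F \<epsilon> in at_right 0. \<forall>x\<in>\<Omega>. \<bar>u \<epsilon> x\<bar> \<le> C * \<epsilon> powr a"
    by (rule eventually_mono) (drule spec[of _ "[]"], simp)
  have "\<forall>\<^sub>F \<epsilon> in at_right 0. \<forall>x\<in>closure \<Omega>. \<bar>u \<epsilon> x\<bar> \<le> C * \<epsilon> powr a"
    using bound eventually_at_right_0_in_unit_interval
  proof eventually_elim
    case (elim \<epsilon>)
    then have "C_inf_closure \<Omega> (u \<epsilon>)"
      using assms unfolding moderate_smooth_net_def by simp
    then have "continuous_on (closure \<Omega>) (u \<epsilon>)"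
      unfolding C_inf_closure_def by blast
    with elim(1) show ?case using continuous_on_closure_norm_le[of \<Omega> "u \<epsilon>"] by simp
  qed
  moreover have "moderate_net (\<lambda>\<epsilon>. C * \<epsilon> powr a)"
    by (intro moderate_net_mult moderate_net_const moderate_net_powr)
  ultimately show thesis using that by simp
qed

lemma moderate_smooth_nets_bounded_on_closure:
  assumes "finite I" and "\<forall>i\<in>I. moderate_smooth_net \<Omega> (u i)"
  obtains B where "moderate_net B" and "\<forall>\<^sub>F \<epsilon> in at_right 0. \<forall>i\<in>I. \<forall>x\<in>closure \<Omega>. \<bar>u i \<epsilon> x\<bar> \<le> B \<epsilon>"
proof -
  have "\<forall>i\<in>I. \<exists>B. moderate_net B \<and> (\<forall>\<^sub>F \<epsilon> in at_right 0. \<forall>x\<in>closure \<Omega>. \<bar>u i \<epsilon> x\<bar> \<le> B \<epsilon>)"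
  proof
    fix i assume "i \<in> I"
    have "moderate_smooth_net \<Omega> (u i)" using assms(2) \<open>i \<in> I\<close> by blast
    then obtain B where "moderate_net B" "\<forall>\<^sub>F \<epsilon> in at_right 0. \<forall>x\<in>closure \<Omega>. \<bar>u i \<epsilon> x\<bar> \<le> B \<epsilon>"
      by (rule moderate_smooth_net_bounded_on_closure)
    then show "\<exists>B. moderate_net B \<and> (\<forall>\<^sub>F \<epsilon> in at_right 0. \<forall>x\<in>closure \<Omega>. \<bar>u i \<epsilon> x\<bar> \<le> B \<epsilon>)"
      by blast
  qed
  then obtain Bs where "\<forall>i\<in>I. moderate_net (Bs i) \<and>
      (\<forall>\<^sub>F \<epsilon> in at_right 0. \<forall>x\<in>closure \<Omega>. \<bar>u i \<epsilon> x\<bar> \<le> Bs i \<epsilon>)"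
    by (rule bchoice[elim_format]) blast
  then have Bs: "\<And>i. i \<in> I \<Longrightarrow> moderate_net (Bs i)"
    "\<And>i. i \<in> I \<Longrightarrow> \<forall>\<^sub>F \<epsilon> in at_right 0. \<forall>x\<in>closure \<Omega>. \<bar>u i \<epsilon> x\<bar> \<le> Bs i \<epsilon>"
    by simp_all
  have "moderate_net (\<lambda>\<epsilon>. \<Sum>i\<in>I. \<bar>Bs i \<epsilon>\<bar>)"
  proof (rule moderate_net_sum[OF assms(1)])
    fix i assume "i \<in> I"
    then show "moderate_net (\<lambda>\<epsilon>. \<bar>Bs i \<epsilon>\<bar>)"
      by (rule moderate_net_dominated[OF Bs(1)]) simp_all
  qed
  moreover have "\<forall>\<^sub>F \<epsilon> in at_right 0. \<forall>i\<in>I. \<forall>x\<in>closure \<Omega>. \<bar>u i \<epsilon> x\<bar> \<le> (\<Sum>i\<in>I. \<bar>Bs i \<epsilon>\<bar>)"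
  proof -
    have "\<forall>\<^sub>F \<epsilon> in at_right 0. \<forall>i\<in>I. \<forall>x\<in>closure \<Omega>. \<bar>u i \<epsilon> x\<bar> \<le> Bs i \<epsilon>"
      using Bs(2) by (intro eventually_ball_finite[OF assms(1)] ballI)
    then show ?thesis
    proof (rule eventually_mono, intro ballI)
      fix \<epsilon> i x
      assume "\<forall>i\<in>I. \<forall>x\<in>closure \<Omega>. \<bar>u i \<epsilon> x\<bar> \<le> Bs i \<epsilon>" and i: "i \<in> I" and "x \<in> closure \<Omega>"
      then have "\<bar>u i \<epsilon> x\<bar> \<le> \<bar>Bs i \<epsilon>\<bar>" by fastforce
      also have "\<dots> \<le> (\<Sum>i\<in>I. \<bar>Bs i \<epsilon>\<bar>)" using assms(1) i by (intro member_le_sum) auto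
      finally show "\<bar>u i \<epsilon> x\<bar> \<le> (\<Sum>i\<in>I. \<bar>Bs i \<epsilon>\<bar>)" .
    qed
  qed
  ultimately show thesis by (rule that)
qed

lemma coefficient_threshold_bounds:
  fixes b :: "nat \<Rightarrow> 'a \<Rightarrow> real" and nn :: "nat \<Rightarrow> int" and X :: "'a set"
  assumes X: "X \<noteq> {}" and K: "1 \<le> K"
    and lowest: "\<forall>i\<in>{1..K} - {1}. nn 1 < nn i" and highest: "\<forall>i\<in>{1..K} - {K}. nn i < nn K"
    and bound: "\<forall>i\<in>{1..K}. \<forall>x\<in>X. \<bar>b i x\<bar> \<le> B"
    and c3: "c3 > 0" "\<forall>x\<in>X. b 1 x \<le> - c3" and c4: "c4 > 0" "\<forall>x\<in>X. b K x \<ge> c4"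
  defines "\<delta> \<equiv> c3 / (real K * B + c3)" and "y0 \<equiv> 1 + real K * B / c4"
  shows "0 < \<delta>"
    and "\<delta> \<le> Sup {c. c > 0 \<and> (\<forall>y\<in>{0<..<c}. (\<Sum>i=1..K. Sup (b i ` X) * y powi nn i) < 0)}"
    and "Sup {c. c > 0 \<and> (\<forall>y\<in>{0<..<c}. (\<Sum>i=1..K. Sup (b i ` X) * y powi nn i) < 0)} \<le> y0"
    and "\<delta> \<le> Inf {c. \<forall>y\<in>{c<..}. (\<Sum>i=1..K. Inf (b i ` X) * y powi nn i) > 0}"
    and "Inf {c. \<forall>y\<in>{c<..}. (\<Sum>i=1..K. Inf (b i ` X) * y powi nn i) > 0} \<le> y0"
proof -
  have bounds: "- B \<le> b i x \<and> b i x \<le> B" if "i \<in> {1..K}" "x \<in> X" for i x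
  proof -
    have "\<bar>b i x\<bar> \<le> B" using bound that by blast
    then show ?thesis by linarith
  qed
  have bdd: "bdd_above (b i ` X)" "bdd_below (b i ` X)" if "i \<in> {1..K}" for i
    using bounds[OF that] by (auto intro!: bdd_aboveI2[where M=B] bdd_belowI2[where m="- B"])
  have "\<bar>Sup (b i ` X)\<bar> \<le> B \<and> \<bar>Inf (b i ` X)\<bar> \<le> B" if i: "i \<in> {1..K}" for i
  proof -
    obtain x where x: "x \<in> X" using X by blast
    have "Inf (b i ` X) \<le> b i x" "b i x \<le> Sup (b i ` X)"
      using bdd[OF i] x by (auto intro: cInf_lower cSup_upper)
    moreover have "Sup (b i ` X) \<le> B" "- B \<le> Inf (b i ` X)"
      using X bounds[OF i] by (auto intro!: cSup_least cInf_greatest)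
    moreover have "- B \<le> b i x \<and> b i x \<le> B" using bounds[OF i x] .
    ultimately show ?thesis by linarith
  qed
  then have Sup_B: "\<forall>i\<in>{1..K}. \<bar>Sup (b i ` X)\<bar> \<le> B"
    and Inf_B: "\<forall>i\<in>{1..K}. \<bar>Inf (b i ` X)\<bar> \<le> B" by auto
  have 1: "1 \<in> {1..K}" and "K \<in> {1..K}" using K by auto
  have B: "B \<ge> 0" using Sup_B 1 by (meson abs_ge_zero order.trans)
  have Sup_1: "Sup (b 1 ` X) \<le> - c3" using X c3(2) by (intro cSup_least) auto
  have Inf_1: "Inf (b 1 ` X) \<le> - c3"
    using X c3(2) bdd(2)[OF 1] by (meson cInf_lower ex_in_conv image_eqI order.trans)
  have Inf_K: "Inf (b K ` X) \<ge> c4" using X c4(2) by (intro cInf_greatest) auto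
  have Sup_K: "Sup (b K ` X) \<ge> c4"
    using X c4(2) bdd(1)[OF \<open>K \<in> {1..K}\<close>] by (meson cSup_upper ex_in_conv image_eqI order.trans)
  show \<delta>: "0 < \<delta>" unfolding \<delta>_def using B c3 by (simp add: add_nonneg_pos)
  have Sup_neg: "\<forall>y\<in>{0<..\<delta>}. (\<Sum>i=1..K. Sup (b i ` X) * y powi nn i) < 0"
    using powi_sum_neg_near_0[OF K lowest Sup_1 c3(1) B Sup_B] unfolding \<delta>_def by auto
  have Inf_neg: "\<forall>y\<in>{0<..\<delta>}. (\<Sum>i=1..K. Inf (b i ` X) * y powi nn i) < 0"
    using powi_sum_neg_near_0[OF K lowest Inf_1 c3(1) B Inf_B] unfolding \<delta>_def by auto
  have Sup_pos: "\<forall>y\<in>{y0..}. (\<Sum>i=1..K. Sup (b i ` X) * y powi nn i) > 0"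
    using powi_sum_pos_at_top[OF K highest Sup_K c4(1) B Sup_B] unfolding y0_def by auto
  have Inf_pos: "\<forall>y\<in>{y0..}. (\<Sum>i=1..K. Inf (b i ` X) * y powi nn i) > 0"
    using powi_sum_pos_at_top[OF K highest Inf_K c4(1) B Inf_B] unfolding y0_def by auto
  show "\<delta> \<le> Sup {c. c > 0 \<and> (\<forall>y\<in>{0<..<c}. (\<Sum>i=1..K. Sup (b i ` X) * y powi nn i) < 0)}"
    by (rule sign_change_threshold_bounds(1)[OF \<delta> Sup_neg Sup_pos])
  show "Sup {c. c > 0 \<and> (\<forall>y\<in>{0<..<c}. (\<Sum>i=1..K. Sup (b i ` X) * y powi nn i) < 0)} \<le> y0"
    by (rule sign_change_threshold_bounds(2)[OF \<delta> Sup_neg Sup_pos])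
  show "\<delta> \<le> Inf {c. \<forall>y\<in>{c<..}. (\<Sum>i=1..K. Inf (b i ` X) * y powi nn i) > 0}"
    by (rule sign_change_threshold_bounds(3)[OF \<delta> Inf_neg Inf_pos])
  show "Inf {c. \<forall>y\<in>{c<..}. (\<Sum>i=1..K. Inf (b i ` X) * y powi nn i) > 0} \<le> y0"
    by (rule sign_change_threshold_bounds(4)[OF \<delta> Inf_neg Inf_pos])
qed

lemma threshold_min_max_bounds:
  fixes b :: "nat \<Rightarrow> 'a \<Rightarrow> real" and \<rho> :: "'a \<Rightarrow> real" and nn :: "nat \<Rightarrow> int" and X \<Gamma> :: "'a set"
  assumes X: "X \<noteq> {}" and \<Gamma>: "\<Gamma> \<noteq> {}" and K: "1 \<le> K"
    and lowest: "\<forall>i\<in>{1..K} - {1}. nn 1 < nn i" and highest: "\<forall>i\<in>{1..K} - {K}. nn i < nn K"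
    and bound: "\<forall>i\<in>{1..K}. \<forall>x\<in>X. \<bar>b i x\<bar> \<le> B"
    and c3: "c3 > 0" "\<forall>x\<in>X. b 1 x \<le> - c3" and c4: "c4 > 0" "\<forall>x\<in>X. b K x \<ge> c4"
    and c5: "c5 > 0" and \<rho>: "\<forall>x\<in>\<Gamma>. c5 \<le> \<rho> x \<and> \<rho> x \<le> R"
  defines "\<delta> \<equiv> c3 / (real K * B + c3)" and "y0 \<equiv> 1 + real K * B / c4"
    and "alph \<equiv> min (Sup {c. c > 0 \<and> (\<forall>y\<in>{0<..<c}. (\<Sum>i=1..K. Sup (b i ` X) * y powi nn i) < 0)})
                    (Inf (\<rho> ` \<Gamma>))"
    and "bet \<equiv> max (Inf {c. \<forall>y\<in>{c<..}. (\<Sum>i=1..K. Inf (b i ` X) * y powi nn i) > 0}) (Sup (\<rho> ` \<Gamma>))"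
  shows "0 < alph" "alph \<le> y0" "1 / alph \<le> 1 / \<delta> + 1 / c5"
    and "0 < bet" "bet \<le> y0 + R" "1 / bet \<le> 1 / \<delta>"
proof -
  note thresholds = coefficient_threshold_bounds[OF X K lowest highest bound c3 c4, folded \<delta>_def y0_def]
  have "c5 \<le> Inf (\<rho> ` \<Gamma>)" "Sup (\<rho> ` \<Gamma>) \<le> R" using \<Gamma> \<rho> by (auto intro!: cInf_greatest cSup_least)
  moreover have "c5 \<le> R" using \<Gamma> \<rho> by fastforce
  ultimately have alph: "min \<delta> c5 \<le> alph" "alph \<le> y0" and bet: "\<delta> \<le> bet" "bet \<le> y0 + R"
    using thresholds c5 unfolding alph_def bet_def by (auto simp: min_def max_def)
  show "0 < alph" "alph \<le> y0" "0 < bet" "bet \<le> y0 + R"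
    using alph bet thresholds(1) c5 by auto
  have "1 / alph \<le> 1 / min \<delta> c5"
    using alph(1) thresholds(1) c5 by (intro divide_left_mono) auto
  also have "\<dots> \<le> 1 / \<delta> + 1 / c5"
    using thresholds(1) c5 by (simp add: min_def)
  finally show "1 / alph \<le> 1 / \<delta> + 1 / c5" .
  show "1 / bet \<le> 1 / \<delta>"
    using bet(1) thresholds(1) by (intro divide_left_mono) auto
qed

lemma moderate_sign_change_thresholds:
  fixes b :: "nat \<Rightarrow> real \<Rightarrow> 'a \<Rightarrow> real" and \<rho> :: "real \<Rightarrow> 'a \<Rightarrow> real" and nn :: "nat \<Rightarrow> int"
    and X \<Gamma> :: "'a set" and B R :: "real \<Rightarrow> real"
  assumes X: "X \<noteq> {}" and \<Gamma>: "\<Gamma> \<noteq> {}" and K: "1 \<le> K"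
    and lowest: "\<forall>i\<in>{1..K} - {1}. nn 1 < nn i" and highest: "\<forall>i\<in>{1..K} - {K}. nn i < nn K"
    and B: "moderate_net B" "\<forall>\<^sub>F \<epsilon> in at_right 0. \<forall>i\<in>{1..K}. \<forall>x\<in>X. \<bar>b i \<epsilon> x\<bar> \<le> B \<epsilon>"
    and R: "moderate_net R" "\<forall>\<^sub>F \<epsilon> in at_right 0. \<forall>x\<in>\<Gamma>. \<rho> \<epsilon> x \<le> R \<epsilon>"
    and b1: "C3 > 0" "\<forall>\<^sub>F \<epsilon> in at_right 0. \<forall>x\<in>X. b 1 \<epsilon> x \<le> - C3 * \<epsilon> powr a3"
    and bK: "C4 > 0" "\<forall>\<^sub>F \<epsilon> in at_right 0. \<forall>x\<in>X. b K \<epsilon> x \<ge> C4 * \<epsilon> powr a4"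
    and \<rho>: "C5 > 0" "\<forall>\<^sub>F \<epsilon> in at_right 0. \<forall>x\<in>\<Gamma>. \<rho> \<epsilon> x \<ge> C5 * \<epsilon> powr a5"
  defines "alph \<equiv> \<lambda>\<epsilon>. min (Sup {c. c > 0 \<and>
              (\<forall>y\<in>{0<..<c}. (\<Sum>i=1..K. Sup (b i \<epsilon> ` X) * y powi nn i) < 0)}) (Inf (\<rho> \<epsilon> ` \<Gamma>))"
    and "bet \<equiv> \<lambda>\<epsilon>. max (Inf {c.
              \<forall>y\<in>{c<..}. (\<Sum>i=1..K. Inf (b i \<epsilon> ` X) * y powi nn i) > 0}) (Sup (\<rho> \<epsilon> ` \<Gamma>))"
  shows "moderate_net alph \<and> moderate_net bet
       \<and> moderate_net (\<lambda>\<epsilon>. 1 / alph \<epsilon>) \<and> moderate_net (\<lambda>\<epsilon>. 1 / bet \<epsilon>)"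
proof -
  define y0 where "y0 \<epsilon> = 1 + real K / C4 * B \<epsilon> * \<epsilon> powr (- a4)" for \<epsilon>
  define inv_\<delta> where "inv_\<delta> \<epsilon> = 1 + real K / C3 * B \<epsilon> * \<epsilon> powr (- a3)" for \<epsilon>
  have "\<forall>\<^sub>F \<epsilon> in at_right 0. \<bar>alph \<epsilon>\<bar> \<le> \<bar>y0 \<epsilon>\<bar> \<and> \<bar>bet \<epsilon>\<bar> \<le> \<bar>y0 \<epsilon> + R \<epsilon>\<bar>
      \<and> \<bar>1 / alph \<epsilon>\<bar> \<le> \<bar>inv_\<delta> \<epsilon> + 1 / C5 * \<epsilon> powr (- a5)\<bar> \<and> \<bar>1 / bet \<epsilon>\<bar> \<le> \<bar>inv_\<delta> \<epsilon>\<bar>"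
    using B(2) R(2) b1(2) bK(2) \<rho>(2) eventually_at_right_less
  proof eventually_elim
    case (elim \<epsilon>)
    define c3 c4 c5 where "c3 = C3 * \<epsilon> powr a3" and "c4 = C4 * \<epsilon> powr a4" and "c5 = C5 * \<epsilon> powr a5"
    define \<delta> where "\<delta> = c3 / (real K * B \<epsilon> + c3)"
    have c: "c3 > 0" "c4 > 0" "c5 > 0" using b1(1) bK(1) \<rho>(1) elim(6) unfolding c3_def c4_def c5_def by auto
    have "\<forall>x\<in>X. b 1 \<epsilon> x \<le> - c3" "\<forall>x\<in>X. b K \<epsilon> x \<ge> c4" "\<forall>x\<in>\<Gamma>. c5 \<le> \<rho> \<epsilon> x \<and> \<rho> \<epsilon> x \<le> R \<epsilon>"
      using elim(2-5) unfolding c3_def c4_def c5_def by simp_all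
    note bounds = threshold_min_max_bounds[OF X \<Gamma> K lowest highest elim(1) c(1) this(1) c(2) this(2)
        c(3) this(3), folded \<delta>_def]
    have y0_eq: "1 + real K * B \<epsilon> / c4 = y0 \<epsilon>"
      unfolding y0_def c4_def using bK(1) elim(6) by (simp add: powr_minus field_simps)
    have inv_\<delta>_eq: "1 / \<delta> = inv_\<delta> \<epsilon>"
      unfolding inv_\<delta>_def \<delta>_def c3_def using b1(1) elim(6) by (simp add: powr_minus field_simps)
    have inv_c5_eq: "1 / c5 = 1 / C5 * \<epsilon> powr (- a5)"
      unfolding c5_def using \<rho>(1) elim(6) by (simp add: powr_minus field_simps)
    have "0 < alph \<epsilon>" "alph \<epsilon> \<le> y0 \<epsilon>" "1 / alph \<epsilon> \<le> inv_\<delta> \<epsilon> + 1 / C5 * \<epsilon> powr (- a5)"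
      "0 < bet \<epsilon>" "bet \<epsilon> \<le> y0 \<epsilon> + R \<epsilon>" "1 / bet \<epsilon> \<le> inv_\<delta> \<epsilon>"
      using bounds unfolding alph_def bet_def y0_eq inv_\<delta>_eq inv_c5_eq by (simp_all only:)
    then show ?case by (simp add: abs_if)
  qed
  then have dominated: "\<forall>\<^sub>F \<epsilon> in at_right 0. norm (alph \<epsilon>) \<le> norm (y0 \<epsilon>)"
    "\<forall>\<^sub>F \<epsilon> in at_right 0. norm (bet \<epsilon>) \<le> norm (y0 \<epsilon> + R \<epsilon>)"
    "\<forall>\<^sub>F \<epsilon> in at_right 0. norm (1 / alph \<epsilon>) \<le> norm (inv_\<delta> \<epsilon> + 1 / C5 * \<epsilon> powr (- a5))"
    "\<forall>\<^sub>F \<epsilon> in at_right 0. norm (1 / bet \<epsilon>) \<le> norm (inv_\<delta> \<epsilon>)"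
    by (simp_all add: eventually_conj_iff)
  have y0: "moderate_net y0" and inv_\<delta>: "moderate_net inv_\<delta>"
    unfolding y0_def inv_\<delta>_def
    by (intro moderate_net_add moderate_net_mult moderate_net_const moderate_net_powr B(1))+
  have y0_R: "moderate_net (\<lambda>\<epsilon>. y0 \<epsilon> + R \<epsilon>)"
    and inv_\<delta>_c5: "moderate_net (\<lambda>\<epsilon>. inv_\<delta> \<epsilon> + 1 / C5 * \<epsilon> powr (- a5))"
    by (intro moderate_net_add moderate_net_mult moderate_net_const moderate_net_powr R(1) y0 inv_\<delta>)+
  show ?thesis
    using moderate_net_dominated[OF y0 dominated(1)] moderate_net_dominated[OF y0_R dominated(2)]
      moderate_net_dominated[OF inv_\<delta>_c5 dominated(3)] moderate_net_dominated[OF inv_\<delta> dominated(4)]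
    by blast
qed

theorem lemma5p6:
  fixes \<Omega> :: "(real^'n::finite) set" and \<alpha> :: real and K :: nat and nn :: "nat \<Rightarrow> int"
    and a :: "'n \<Rightarrow> 'n \<Rightarrow> real \<Rightarrow> real^'n \<Rightarrow> real"
    and b :: "nat \<Rightarrow> real \<Rightarrow> real^'n \<Rightarrow> real"
    and \<rho> :: "real \<Rightarrow> real^'n \<Rightarrow> real"
    and lam :: "real \<Rightarrow> real" and \<Lambda> :: "nat \<Rightarrow> real \<Rightarrow> real"
    and C1 C3 C4 C5 a1 a3 a4 a5 :: real and C2 a2 :: "nat \<Rightarrow> real"
    and alpha' beta' alph bet :: "real \<Rightarrow> real"
  assumes dom: "open \<Omega>" "\<Omega> \<noteq> {}" "connected \<Omega>" "bounded \<Omega>" "smooth_domain \<Omega>"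
    and alpha: "0 < \<alpha>" "\<alpha> < 1"
    and distinct: "inj_on nn {1..K}"
    and EM: "\<forall>i j. moderate_smooth_net \<Omega> (a i j)"
            "\<forall>i\<in>{1..K}. moderate_smooth_net \<Omega> (b i)"
            "moderate_smooth_net \<Omega> \<rho>"
    and cpos: "C1 > 0" "\<forall>k. C2 k > 0" "C3 > 0" "C4 > 0" "C5 > 0"
    and sym: "\<forall>\<epsilon>\<in>{0<..<1}. \<forall>i j. \<forall>x\<in>closure \<Omega>. a i j \<epsilon> x = a j i \<epsilon> x"
    and ell: "\<forall>\<epsilon>\<in>{0<..<1}. \<forall>x\<in>closure \<Omega>. \<forall>\<xi>::real^'n.
               (\<Sum>i\<in>UNIV. \<Sum>j\<in>UNIV. a i j \<epsilon> x * \<xi>$i * \<xi>$j) \<ge> lam \<epsilon> * (norm \<xi>)^2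
             \<and> lam \<epsilon> * (norm \<xi>)^2 \<ge> C1 * \<epsilon> powr a1 * (norm \<xi>)^2"
    and hold: "\<forall>k. \<forall>\<epsilon>\<in>{0<..<1}.
               (\<forall>i j. holder_norm k \<alpha> \<Omega> (a i j \<epsilon>) \<le> ereal (\<Lambda> k \<epsilon>))
             \<and> (\<forall>i\<in>{1..K}. holder_norm k \<alpha> \<Omega> (b i \<epsilon>) \<le> ereal (\<Lambda> k \<epsilon>))
             \<and> \<Lambda> k \<epsilon> \<le> C2 k * \<epsilon> powr a2 k"
    and neg: "{nn i | i. i \<in> {1..K} \<and> nn i < 0} \<noteq> {}"
             "nn 1 = Min {nn i | i. i \<in> {1..K} \<and> nn i < 0}"
             "\<forall>\<epsilon>\<in>{0<..<1}. \<forall>x\<in>closure \<Omega>. b 1 \<epsilon> x \<le> - C3 * \<epsilon> powr a3"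
    and pos: "{nn i | i. i \<in> {1..K} \<and> nn i > 0} \<noteq> {}"
             "nn K = Max {nn i | i. i \<in> {1..K} \<and> nn i > 0}"
             "\<forall>\<epsilon>\<in>{0<..<1}. \<forall>x\<in>closure \<Omega>. b K \<epsilon> x \<ge> C4 * \<epsilon> powr a4"
    and rho: "\<forall>\<epsilon>\<in>{0<..<1}. \<forall>x\<in>closure \<Omega>. \<rho> \<epsilon> x \<ge> C5 * \<epsilon> powr a5"
    and alpha'_def: "\<And>\<epsilon>. alpha' \<epsilon> = Sup {c. c > 0 \<and>
              (\<forall>y\<in>{0<..<c}. (\<Sum>i=1..K. Sup (b i \<epsilon> ` closure \<Omega>) * y powi nn i) < 0)}"
    and beta'_def: "\<And>\<epsilon>. beta' \<epsilon> = Inf {c::real.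
              (\<forall>y\<in>{c<..}. (\<Sum>i=1..K. Inf (b i \<epsilon> ` closure \<Omega>) * y powi nn i) > 0)}"
    and alph_def: "\<And>\<epsilon>. alph \<epsilon> = min (alpha' \<epsilon>) (Inf (\<rho> \<epsilon> ` frontier \<Omega>))"
    and bet_def: "\<And>\<epsilon>. bet \<epsilon> = max (beta' \<epsilon>) (Sup (\<rho> \<epsilon> ` frontier \<Omega>))"
  shows "moderate_net (\<lambda>\<epsilon>. complex_of_real (alph \<epsilon>))
       \<and> moderate_net (\<lambda>\<epsilon>. complex_of_real (bet \<epsilon>))
       \<and> moderate_net (\<lambda>\<epsilon>. complex_of_real (1 / alph \<epsilon>))
       \<and> moderate_net (\<lambda>\<epsilon>. complex_of_real (1 / bet \<epsilon>))"
proof -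
  have K: "1 \<le> K" and lowest: "\<forall>i\<in>{1..K} - {1}. nn 1 < nn i"
    using Min_negative_exponent_lowest[OF distinct neg(1,2)] by blast+
  have highest: "\<forall>i\<in>{1..K} - {K}. nn i < nn K"
    using Max_positive_exponent_highest[OF distinct pos(1,2)] .
  have closure_ne: "closure \<Omega> \<noteq> {}" using dom(2) by simp
  have frontier_ne: "frontier \<Omega> \<noteq> {}"
    using frontier_not_empty[OF dom(2)] dom(4) not_bounded_UNIV by blast
  have frontier_closure: "frontier \<Omega> \<subseteq> closure \<Omega>" unfolding frontier_def by blast
  obtain B where B: "moderate_net B"
    "\<forall>\<^sub>F \<epsilon> in at_right 0. \<forall>i\<in>{1..K}. \<forall>x\<in>closure \<Omega>. \<bar>b i \<epsilon> x\<bar> \<le> B \<epsilon>"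
    using moderate_smooth_nets_bounded_on_closure[OF _ EM(2)] by blast
  obtain R where R: "moderate_net R" "\<forall>\<^sub>F \<epsilon> in at_right 0. \<forall>x\<in>closure \<Omega>. \<bar>\<rho> \<epsilon> x\<bar> \<le> R \<epsilon>"
    using moderate_smooth_net_bounded_on_closure[OF EM(3)] by blast
  have R_frontier: "\<forall>\<^sub>F \<epsilon> in at_right 0. \<forall>x\<in>frontier \<Omega>. \<rho> \<epsilon> x \<le> R \<epsilon>"
    using R(2) frontier_closure by (auto elim!: eventually_mono dest!: bspec)
  have "\<forall>\<^sub>F \<epsilon> in at_right 0. \<forall>x\<in>closure \<Omega>. b 1 \<epsilon> x \<le> - C3 * \<epsilon> powr a3"
    "\<forall>\<^sub>F \<epsilon> in at_right 0. \<forall>x\<in>closure \<Omega>. b K \<epsilon> x \<ge> C4 * \<epsilon> powr a4"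
    "\<forall>\<^sub>F \<epsilon> in at_right 0. \<forall>x\<in>frontier \<Omega>. \<rho> \<epsilon> x \<ge> C5 * \<epsilon> powr a5"
    using eventually_at_right_0_in_unit_interval neg(3) pos(3) rho frontier_closure
    by (auto elim!: eventually_mono)
  from moderate_sign_change_thresholds[OF closure_ne frontier_ne K lowest highest B R(1) R_frontier
      cpos(3) this(1) cpos(4) this(2) cpos(5) this(3)]
  show ?thesis
    unfolding alph_def alpha'_def bet_def beta'_def moderate_net_of_real_iff .
qed

end
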